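(* Let $(A,B)$ be an $n\times n$ definite pencil and let $\epsilon>0$. If $A',B'\in\mathbb{C}^{n\times n}$ satisfy $\|A-A'\|_2,\|B-B'\|_2\le\eta<\frac{\epsilon}{\sqrt2}$ with $A-A'$ and $B-B'$ Hermitian, then $$\Lambda^{\mathrm{sym}}_{\epsilon-\sqrt2\eta}(A',B')\subseteq\Lambda^{\mathrm{sym}}_\epsilon(A,B).$$
   Context: A pencil $(A,B)$ of $n\times n$ complex matrices is definite if $A,B$ are Hermitian and $\gamma(A,B)=\min_{\|x\|_2=1}|x^H(A+iB)x|>0$. For a pencil $(A,B)$ with $A,B$ Hermitian and $\delta>0$, $\Lambda^{\mathrm{sym}}_\delta(A,B)=\{z\in\mathbb{C}:(A+E)u=z(B+F)u$ for some $u\ne0$ and Hermitian $E,F$ with $\sqrt{\|E\|_2^2+\|F\|_2^2}\le\delta\}$. *)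

theory Defs
  imports "HOL-Analysis.Analysis"
begin

text \<open>n x n complex matrices are modelled as complex^'n^'n (index type 'n finite);
  vectors of C^n as complex^'n with the Euclidean norm.\<close>

definition conj_transpose :: "complex^'n^'m \<Rightarrow> complex^'m^'n" where
  "conj_transpose M = (\<chi> i j. cnj (M $ j $ i))"

definition hermitian :: "complex^'n^'n \<Rightarrow> bool" where
  "hermitian M \<longleftrightarrow> conj_transpose M = M"

definition spec_norm :: "complex^'n^'m \<Rightarrow> real" where
  "spec_norm M = onorm (\<lambda>x::complex^'n. M *v x)"

definition cinner :: "complex^'n \<Rightarrow> complex^'n \<Rightarrow> complex" where
  "cinner x y = (\<Sum>i\<in>UNIV. cnj (x $ i) * y $ i)"

definition crawford :: "complex^'n^'n \<Rightarrow> complex^'n^'n \<Rightarrow> real" where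
  "crawford A B = Inf {cmod (cinner x ((A + (\<chi> i j. \<i> * B $ i $ j)) *v x)) | x. norm x = 1}"

definition definite_pencil :: "complex^'n^'n \<Rightarrow> complex^'n^'n \<Rightarrow> bool" where
  "definite_pencil A B \<longleftrightarrow> hermitian A \<and> hermitian B \<and> crawford A B > 0"

definition sym_pseudospectrum :: "real \<Rightarrow> complex^'n^'n \<Rightarrow> complex^'n^'n \<Rightarrow> complex set" where
  "sym_pseudospectrum \<delta> A B = {z. \<exists>u E F. u \<noteq> 0 \<and> hermitian E \<and> hermitian F \<and>
      sqrt ((spec_norm E)\<^sup>2 + (spec_norm F)\<^sup>2) \<le> \<delta> \<and>
      (A + E) *v u = z *s ((B + F) *v u)}"

end

theory Submission
  imports Defs
begin

text \<open>A Hermitian perturbation of the pencil can be absorbed into the Hermitian perturbations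
  defining the pseudospectrum: if \<open>(A' + E) u = z (B' + F) u\<close>, then \<open>(A + E') u = z (B + F') u\<close>
  with \<open>E' = E - (A - A')\<close>, \<open>F' = F - (B - B')\<close>. By the triangle inequality for the
  spectral norm and for the Euclidean norm on \<open>\<real>\<^sup>2\<close>, the size of \<open>(E', F')\<close> grows by at most
  the size \<open>\<surd>2 \<eta>\<close> of \<open>(A - A', B - B')\<close>.\<close>

lemma hermitian_iff: "hermitian M \<longleftrightarrow> (\<forall>i j. cnj (M $ j $ i) = M $ i $ j)"
  unfolding hermitian_def conj_transpose_def by (simp add: vec_eq_iff)

lemma hermitian_diff: "hermitian M \<Longrightarrow> hermitian N \<Longrightarrow> hermitian (M - N)"
  unfolding hermitian_iff by simp

lemma spec_norm_nonneg: "spec_norm (M::complex^'n^'m) \<ge> 0"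
  unfolding spec_norm_def by (rule onorm_pos_le) simp

lemma spec_norm_diff_le: "spec_norm ((M::complex^'n^'m) - N) \<le> spec_norm M + spec_norm N"
proof -
  have "spec_norm (M - N) = onorm (\<lambda>x::complex^'n. M *v x + - (N *v x))"
    unfolding spec_norm_def
    by (rule arg_cong[of _ _ onorm]) (simp add: fun_eq_iff matrix_vector_mult_diff_rdistrib)
  also have "\<dots> \<le> onorm (\<lambda>x::complex^'n. M *v x) + onorm (\<lambda>x::complex^'n. - (N *v x))"
    by (intro onorm_triangle bounded_linear_minus matrix_vector_mul_bounded_linear)
  also have "\<dots> = spec_norm M + spec_norm N"
    unfolding spec_norm_def onorm_neg ..
  finally show ?thesis .
qed

lemma sym_pseudospectrum_mono:
  "\<delta> \<le> \<delta>' \<Longrightarrow> sym_pseudospectrum \<delta> A B \<subseteq> sym_pseudospectrum \<delta>' A B"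
  unfolding sym_pseudospectrum_def by fastforce

lemma sym_pseudospectrum_perturb:
  fixes A B A' B' :: "complex^'n^'n"
  assumes "hermitian (A - A')" and "hermitian (B - B')"
  shows "sym_pseudospectrum \<delta> A' B'
    \<subseteq> sym_pseudospectrum (\<delta> + sqrt ((spec_norm (A - A'))\<^sup>2 + (spec_norm (B - B'))\<^sup>2)) A B"
proof
  fix z assume "z \<in> sym_pseudospectrum \<delta> A' B'"
  then obtain u E F where "u \<noteq> 0" and "hermitian E" and "hermitian F"
    and small: "sqrt ((spec_norm E)\<^sup>2 + (spec_norm F)\<^sup>2) \<le> \<delta>"
    and eigen: "(A' + E) *v u = z *s ((B' + F) *v u)"
    unfolding sym_pseudospectrum_def by blast
  define E' where "E' = E - (A - A')"
  define F' where "F' = F - (B - B')"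
  have eigen': "(A + E') *v u = z *s ((B + F') *v u)"
    using eigen unfolding E'_def F'_def by (simp add: algebra_simps)
  have "hermitian E'" and "hermitian F'"
    unfolding E'_def F'_def using assms \<open>hermitian E\<close> \<open>hermitian F\<close> by (simp_all add: hermitian_diff)
  have "sqrt ((spec_norm E')\<^sup>2 + (spec_norm F')\<^sup>2)
      \<le> sqrt ((spec_norm E + spec_norm (A - A'))\<^sup>2 + (spec_norm F + spec_norm (B - B'))\<^sup>2)"
    unfolding E'_def F'_def
    by (intro real_sqrt_le_mono add_mono power_mono spec_norm_diff_le spec_norm_nonneg)
  also have "\<dots> \<le> sqrt ((spec_norm E)\<^sup>2 + (spec_norm F)\<^sup>2)
      + sqrt ((spec_norm (A - A'))\<^sup>2 + (spec_norm (B - B'))\<^sup>2)"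
    by (rule real_sqrt_sum_squares_triangle_ineq)
  also have "\<dots> \<le> \<delta> + sqrt ((spec_norm (A - A'))\<^sup>2 + (spec_norm (B - B'))\<^sup>2)"
    using small by simp
  finally show "z \<in> sym_pseudospectrum (\<delta> + sqrt ((spec_norm (A - A'))\<^sup>2
      + (spec_norm (B - B'))\<^sup>2)) A B"
    unfolding sym_pseudospectrum_def
    using \<open>u \<noteq> 0\<close> \<open>hermitian E'\<close> \<open>hermitian F'\<close> eigen' by blast
qed

theorem lemma3p10:
  fixes A B A' B' :: "complex^'n^'n" and \<epsilon> \<eta> :: real
  assumes "definite_pencil A B"
    and "\<epsilon> > 0"
    and "hermitian (A - A')" and "hermitian (B - B')"
    and "spec_norm (A - A') \<le> \<eta>" and "spec_norm (B - B') \<le> \<eta>"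
    and "\<eta> < \<epsilon> / sqrt 2"
  shows "sym_pseudospectrum (\<epsilon> - sqrt 2 * \<eta>) A' B' \<subseteq> sym_pseudospectrum \<epsilon> A B"
proof -
  have "\<eta> \<ge> 0"
    using spec_norm_nonneg[of "A - A'"] assms(5) by linarith
  have "sqrt ((spec_norm (A - A'))\<^sup>2 + (spec_norm (B - B'))\<^sup>2) \<le> sqrt (\<eta>\<^sup>2 + \<eta>\<^sup>2)"
    using assms(5,6) by (intro real_sqrt_le_mono add_mono power_mono spec_norm_nonneg)
  also have "\<dots> = sqrt 2 * \<eta>"
    using \<open>\<eta> \<ge> 0\<close> by (simp add: real_sqrt_mult)
  finally have "\<epsilon> - sqrt 2 * \<eta> + sqrt ((spec_norm (A - A'))\<^sup>2 + (spec_norm (B - B'))\<^sup>2) \<le> \<epsilon>"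
    by linarith
  then show ?thesis
    using sym_pseudospectrum_perturb[OF assms(3,4)] sym_pseudospectrum_mono by blast
qed

end
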